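(* Let $\mathbb K=\prod_s\mathbb F_s^{alg}/\mathcal D$. Then $\mathbb K\cap\mathbb F^{alg}=\mathfrak K^{alg}$, where $\mathfrak K^{alg}$ is the set of elements of $\mathbb K$ algebraic over $\mathfrak K$ (an algebraic closure of $\mathfrak K$).
   Context: Let $S$ be an infinite set, $\mathcal D$ a nonprincipal ultrafilter on $S$; ultraproducts $\prod_sA_s/\mathcal D$ consist of tuples modulo agreement on a set in $\mathcal D$, classes written $\mathrm{ulim}_sa_s$, componentwise operations. For each $s$ let $\mathbb F_s$ be a field, $\mathfrak F_s=\mathbb F_s(t)$, fix an algebraic closure $\mathfrak F_s^{alg}$ and let $\mathbb F_s^{alg}\subseteq\mathfrak F_s^{alg}$ be the algebraic closure of $\mathbb F_s$ in it. Let $\mathfrak K=\prod_s\mathbb F_s/\mathcal D$, $\mathbb F=\mathfrak K(t)\subseteq\prod_s\mathfrak F_s/\mathcal D$ (via $\sum_i(\mathrm{ulim}_sa_{i,s})t^i\mapsto\mathrm{ulim}_s\sum_ia_{i,s}t^i$), and $\mathbb F^{alg}$ the set of elements of $\prod_s\mathfrak F_s^{alg}/\mathcal D$ algebraic over $\mathbb F$; note $\mathbb K\subseteq\prod_s\mathfrak F_s^{alg}/\mathcal D$. *)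

theory Defs
  imports "HOL-Algebra.Algebra" "HOL-Algebra.Generated_Fields" "HOL-Library.FuncSet"
begin

definition ultrafilter_on :: "'s set \<Rightarrow> 's set set \<Rightarrow> bool" where
  "ultrafilter_on S D \<longleftrightarrow>
     D \<subseteq> Pow S \<and> S \<in> D \<and> {} \<notin> D \<and>
     (\<forall>A B. A \<in> D \<longrightarrow> B \<in> D \<longrightarrow> A \<inter> B \<in> D) \<and>
     (\<forall>A B. A \<in> D \<longrightarrow> A \<subseteq> B \<longrightarrow> B \<subseteq> S \<longrightarrow> B \<in> D) \<and>
     (\<forall>A. A \<subseteq> S \<longrightarrow> A \<in> D \<or> S - A \<in> D)"

definition nonprincipal_on :: "'s set \<Rightarrow> 's set set \<Rightarrow> bool" where
  "nonprincipal_on S D \<longleftrightarrow> (\<forall>s\<in>S. {s} \<notin> D)"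

definition uprod :: "'s set \<Rightarrow> ('s \<Rightarrow> ('a, 'b) ring_scheme) \<Rightarrow> ('s \<Rightarrow> 'a) set" where
  "uprod S L = (\<Pi>\<^sub>E s\<in>S. carrier (L s))"

definition ueq :: "'s set set \<Rightarrow> 's set \<Rightarrow> ('s \<Rightarrow> 'a) \<Rightarrow> ('s \<Rightarrow> 'a) \<Rightarrow> bool" where
  "ueq D S f g \<longleftrightarrow> {s \<in> S. f s = g s} \<in> D"

definition ulim :: "'s set set \<Rightarrow> 's set \<Rightarrow> ('s \<Rightarrow> ('a, 'b) ring_scheme) \<Rightarrow> ('s \<Rightarrow> 'a) \<Rightarrow> ('s \<Rightarrow> 'a) set" where
  "ulim D S L f = {g \<in> uprod S L. ueq D S f g}"

definition urep :: "('s \<Rightarrow> 'a) set \<Rightarrow> ('s \<Rightarrow> 'a)" where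
  "urep P = (SOME f. f \<in> P)"

definition umult :: "'s set set \<Rightarrow> 's set \<Rightarrow> ('s \<Rightarrow> ('a, 'b) ring_scheme) \<Rightarrow> ('s \<Rightarrow> 'a) set \<Rightarrow> ('s \<Rightarrow> 'a) set \<Rightarrow> ('s \<Rightarrow> 'a) set" where
  "umult D S L P Q = ulim D S L (restrict (\<lambda>s. monoid.mult (L s) (urep P s) (urep Q s)) S)"

definition uadd :: "'s set set \<Rightarrow> 's set \<Rightarrow> ('s \<Rightarrow> ('a, 'b) ring_scheme) \<Rightarrow> ('s \<Rightarrow> 'a) set \<Rightarrow> ('s \<Rightarrow> 'a) set \<Rightarrow> ('s \<Rightarrow> 'a) set" where
  "uadd D S L P Q = ulim D S L (restrict (\<lambda>s. ring.add (L s) (urep P s) (urep Q s)) S)"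

definition uone :: "'s set set \<Rightarrow> 's set \<Rightarrow> ('s \<Rightarrow> ('a, 'b) ring_scheme) \<Rightarrow> ('s \<Rightarrow> 'a) set" where
  "uone D S L = ulim D S L (restrict (\<lambda>s. monoid.one (L s)) S)"

definition uzero :: "'s set set \<Rightarrow> 's set \<Rightarrow> ('s \<Rightarrow> ('a, 'b) ring_scheme) \<Rightarrow> ('s \<Rightarrow> 'a) set" where
  "uzero D S L = ulim D S L (restrict (\<lambda>s. ring.zero (L s)) S)"

definition ultraproduct :: "'s set set \<Rightarrow> 's set \<Rightarrow> ('s \<Rightarrow> ('a, 'b) ring_scheme) \<Rightarrow> ('s \<Rightarrow> 'a) set ring" where
  "ultraproduct D S L =
     \<lparr> carrier = ulim D S L ` uprod S L, monoid.mult = umult D S L, one = uone D S L,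
       ring.zero = uzero D S L, ring.add = uadd D S L \<rparr>"

text \<open>The image in the ultraproduct of prod_s A_s / D for subsets A_s of carrier (L s).\<close>
definition usub :: "'s set set \<Rightarrow> 's set \<Rightarrow> ('s \<Rightarrow> ('a, 'b) ring_scheme) \<Rightarrow> ('s \<Rightarrow> 'a set) \<Rightarrow> ('s \<Rightarrow> 'a) set set" where
  "usub D S L A = ulim D S L ` (\<Pi>\<^sub>E s\<in>S. A s)"

definition alg_in :: "('a, 'b) ring_scheme \<Rightarrow> 'a set \<Rightarrow> 'a set" where
  "alg_in L K = {x \<in> carrier L. ring.algebraic L K x}"

end

theory Submission
  imports Defs
begin

(* Write y = ulim x_s with every x_s algebraic over F_s, and T = ulim t_s. The field generated
   by T over K = prod F_s / D lies in prod F_s(t_s) / D, so if y is algebraic over it, Los's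
   theorem yields one degree n such that for D-almost all s the component x_s is a root of a
   nonzero polynomial of degree n over F_s(t_s). Clearing denominators moves its coefficients
   into F_s[t_s]; read as a polynomial in t_s with coefficients in F_s[x_s], it must vanish
   identically, because t_s stays transcendental over F_s(x_s) when x_s is algebraic over F_s.
   Its top coefficient is then a polynomial of degree n over F_s annihilating x_s. Since n does
   not depend on s, these polynomials assemble to a nonzero polynomial over K annihilating y. *)

section \<open>Annihilating polynomials of fixed degree\<close>

(* Polynomials are coefficient lists with the leading coefficient first, so degree n means
   length n + 1 and a nonzero head. *)
definition (in ring) has_annihilator_of_degree :: "'a set \<Rightarrow> nat \<Rightarrow> 'a \<Rightarrow> bool" where
  "has_annihilator_of_degree K n x \<longleftrightarrow>
     (\<exists>p. set p \<subseteq> K \<and> length p = Suc n \<and> hd p \<noteq> \<zero> \<and> eval p x = \<zero>)"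

lemma (in domain) algebraic_iff_has_annihilator:
  assumes "subring K R" "x \<in> carrier R"
  shows "(algebraic over K) x \<longleftrightarrow> (\<exists>n. has_annihilator_of_degree K n x)"
proof
  assume "(algebraic over K) x"
  then obtain p where "p \<in> carrier (K[X])" "p \<noteq> []" "eval p x = \<zero>"
    using algebraicE[OF assms] by blast
  then have "has_annihilator_of_degree K (length p - 1) x"
    unfolding has_annihilator_of_degree_def univ_poly_carrier[symmetric] polynomial_def
    by (intro exI[of _ p]) auto
  then show "\<exists>n. has_annihilator_of_degree K n x" ..
next
  assume "\<exists>n. has_annihilator_of_degree K n x"
  then obtain n p where p: "set p \<subseteq> K" "length p = Suc n" "hd p \<noteq> \<zero>" "eval p x = \<zero>"
    unfolding has_annihilator_of_degree_def by blast
  then have "p \<in> carrier (K[X])" "p \<noteq> []"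
    unfolding univ_poly_carrier[symmetric] polynomial_def by auto
  with p show "(algebraic over K) x"
    using algebraicI by blast
qed

lemma (in ring) eval_map_scalar:
  assumes "set p \<subseteq> carrier R" "b \<in> carrier R" "x \<in> carrier R"
  shows "eval (map (\<lambda>c. b \<otimes> c) p) x = b \<otimes> eval p x"
  using assms(1)
proof (induction p)
  case Nil
  then show ?case using assms by simp
next
  case (Cons a p)
  then have "eval p x \<in> carrier R" using eval_in_carrier assms by auto
  with Cons show ?case
    using assms by (simp add: r_distr m_assoc)
qed

(* Exchanging the roles of x and t: with m + 1 = length Ps,
   sum_i P_i(t) x^(m-i) = sum_j (sum_i coeff P_i j x^(m-i)) t^j. *)
lemma (in cring) eval_map_eval_swap:
  assumes B: "subring B R" "x \<in> B" and t: "t \<in> carrier R"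
    and Ps: "\<And>P. P \<in> set Ps \<Longrightarrow> set P \<subseteq> B"
  shows "\<exists>H. polynomial B H \<and> eval H t = eval (map (\<lambda>P. eval P t) Ps) x
           \<and> (\<forall>j. coeff H j = eval (map (\<lambda>P. coeff P j) Ps) x)"
  using Ps
proof (induction Ps)
  case Nil
  show ?case by (intro exI[of _ "[]"]) auto
next
  case (Cons P Ps)
  obtain H where H: "polynomial B H" "eval H t = eval (map (\<lambda>P. eval P t) Ps) x"
    "\<forall>j. coeff H j = eval (map (\<lambda>P. coeff P j) Ps) x"
    using Cons by auto
  have Bc: "B \<subseteq> carrier R" using subringE(1)[OF B(1)] .
  have xc: "x \<in> carrier R" using B(2) Bc by auto
  define c where "c = x [^] length Ps"
  have "x [^] (n::nat) \<in> B" for n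
    by (induction n) (simp_all add: subringE(3,6)[OF B(1)] B(2))
  then have c: "c \<in> B" "c \<in> carrier R" unfolding c_def using Bc by auto
  have PB: "set P \<subseteq> B" using Cons.prems by simp
  then have Pc: "set P \<subseteq> carrier R" using Bc by auto
  have Hc: "set H \<subseteq> carrier R" using polynomial_incl[OF H(1)] Bc by auto
  define G where "G = map (\<lambda>a. c \<otimes> a) P"
  have GB: "set G \<subseteq> B" unfolding G_def using PB c(1) subringE(6)[OF B(1)] by auto
  then have Gc: "set G \<subseteq> carrier R" using Bc by auto
  define H' where "H' = poly_add (normalize G) H"
  have "polynomial B H'"
    unfolding H'_def using poly_add_closed[OF B(1) normalize_gives_polynomial[OF GB] H(1)] .
  moreover have "eval H' t = eval (map (\<lambda>P. eval P t) (P # Ps)) x"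
  proof -
    have "eval H' t = eval (normalize G) t \<oplus> eval H t"
      unfolding H'_def using eval_poly_add[OF normalize_in_carrier[OF Gc] Hc t] .
    also have "\<dots> = c \<otimes> eval P t \<oplus> eval (map (\<lambda>P. eval P t) Ps) x"
      unfolding G_def using eval_normalize[OF Gc[unfolded G_def] t] eval_map_scalar[OF Pc c(2) t] H(2)
      by simp
    finally show ?thesis
      unfolding c_def using eval_in_carrier[OF Pc t] xc by (simp add: m_comm)
  qed
  moreover have "coeff H' j = eval (map (\<lambda>P. coeff P j) (P # Ps)) x" for j
  proof -
    have "coeff H' j = coeff (normalize G) j \<oplus> coeff H j"
      unfolding H'_def using poly_add_coeff[OF normalize_in_carrier[OF Gc] Hc] by simp
    also have "\<dots> = c \<otimes> coeff P j \<oplus> eval (map (\<lambda>P. coeff P j) Ps) x"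
      unfolding G_def using H(3) by (simp add: normalize_coeff[symmetric] scalar_coeff[OF c(2)])
    finally show ?thesis
      unfolding c_def using coeff_in_carrier[OF Pc] xc by (simp add: m_comm)
  qed
  ultimately show ?case by blast
qed

lemma (in cring) eval_map_coeff_eq_zero:
  assumes B: "subring B R" "x \<in> B" and t: "t \<in> carrier R" "(transcendental over B) t"
    and Ps: "\<And>P. P \<in> set Ps \<Longrightarrow> set P \<subseteq> B"
    and root: "eval (map (\<lambda>P. eval P t) Ps) x = \<zero>"
  shows "eval (map (\<lambda>P. coeff P j) Ps) x = \<zero>"
proof -
  obtain H where H: "polynomial B H" "eval H t = eval (map (\<lambda>P. eval P t) Ps) x"
    "\<forall>j. coeff H j = eval (map (\<lambda>P. coeff P j) Ps) x"
    using eval_map_eval_swap[OF B t(1) Ps] by blast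
  have "eval H t = \<zero>" using H(2) root by simp
  then have "H = []"
    using eval_transcendental[OF t(2)] H(1) univ_poly_carrier by blast
  then show ?thesis using H(3) by simp
qed

definition (in ring) fractions :: "'a set \<Rightarrow> 'a set" where
  "fractions E = {y \<in> carrier R. \<exists>b\<in>E. b \<noteq> \<zero> \<and> y \<otimes> b \<in> E}"

context domain
begin

lemma subset_fractions:
  assumes E: "subring E R" shows "E \<subseteq> fractions E"
  unfolding fractions_def using subringE(1,3)[OF E] one_not_zero by force

lemma common_denominator:
  assumes E: "subring E R" and "set q \<subseteq> fractions E"
  shows "\<exists>b\<in>E. b \<noteq> \<zero> \<and> (\<forall>c\<in>set q. b \<otimes> c \<in> E)"
  using assms(2)
proof (induction q)
  case Nil
  show ?case using subringE(3)[OF E] by (intro bexI[of _ \<one>]) auto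
next
  case (Cons a q)
  then obtain b where b: "b \<in> E" "b \<noteq> \<zero>" "\<forall>c\<in>set q. b \<otimes> c \<in> E" by auto
  obtain d where d: "a \<in> carrier R" "d \<in> E" "d \<noteq> \<zero>" "a \<otimes> d \<in> E"
    using Cons.prems unfolding fractions_def by auto
  have c: "b \<in> carrier R" "d \<in> carrier R" using b d subringE(1)[OF E] by auto
  have "d \<otimes> b \<otimes> c \<in> E" if "c \<in> set (a # q)" for c
  proof (cases "c = a")
    case True
    then have "d \<otimes> b \<otimes> c = (a \<otimes> d) \<otimes> b" using c d by (simp add: m_ac)
    then show ?thesis using subringE(6)[OF E d(4) b(1)] by simp
  next
    case False
    then have "c \<in> set q" using that by simp
    then have "c \<in> carrier R" "b \<otimes> c \<in> E"
      using Cons.prems b(3) unfolding fractions_def by auto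
    then show ?thesis using subringE(6)[OF E d(2)] c by (simp add: m_assoc)
  qed
  moreover have "d \<otimes> b \<in> E" using subringE(6)[OF E d(2) b(1)] .
  moreover have "d \<otimes> b \<noteq> \<zero>" using c b(2) d(3) by (simp add: integral_iff)
  ultimately show ?case by blast
qed

lemma has_annihilator_clear_denominators:
  assumes E: "subring E R" and K: "K \<subseteq> fractions E" and x: "x \<in> carrier R"
    and "has_annihilator_of_degree K n x"
  shows "has_annihilator_of_degree E n x"
proof -
  obtain q where q: "set q \<subseteq> K" "length q = Suc n" "hd q \<noteq> \<zero>" "eval q x = \<zero>"
    using assms(4) unfolding has_annihilator_of_degree_def by blast
  obtain b where b: "b \<in> E" "b \<noteq> \<zero>" "\<forall>c\<in>set q. b \<otimes> c \<in> E"
    using common_denominator[OF E] q(1) K by blast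
  have qc: "set q \<subseteq> carrier R" and bc: "b \<in> carrier R"
    using q(1) K b(1) subringE(1)[OF E] unfolding fractions_def by auto
  have "q \<noteq> []" using q(2) by auto
  then have "hd (map (\<lambda>c. b \<otimes> c) q) \<noteq> \<zero>"
    using q(3) qc bc b(2) by (cases q) (auto simp: integral_iff)
  moreover have "eval (map (\<lambda>c. b \<otimes> c) q) x = \<zero>"
    using eval_map_scalar[OF qc bc x] q(4) bc by simp
  ultimately show ?thesis
    unfolding has_annihilator_of_degree_def using b(3) q(2)
    by (intro exI[of _ "map (\<lambda>c. b \<otimes> c) q"]) auto
qed

(* Write the coefficients of the relation over F[t] as polynomials in t. Transcendence of t over
   B splits the relation into one relation over F per power of t; the one at the degree of the
   first coefficient has a nonzero leading term. *)
lemma has_annihilator_descends_from_simple_extension: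
  assumes F: "subring F R" and B: "subring B R" "F \<subseteq> B" "x \<in> B"
    and t: "t \<in> carrier R" "(transcendental over B) t"
    and "has_annihilator_of_degree (simple_extension F t) n x"
  shows "has_annihilator_of_degree F n x"
proof -
  obtain q where q: "set q \<subseteq> simple_extension F t" "length q = Suc n" "hd q \<noteq> \<zero>" "eval q x = \<zero>"
    using assms(7) unfolding has_annihilator_of_degree_def by blast
  have "q \<in> lists ((\<lambda>P. eval P t) ` carrier (F[X]))"
    using q(1) simple_extension_as_eval_img[OF subringE(1)[OF F] t(1)] by auto
  then obtain Ps where Ps: "set Ps \<subseteq> carrier (F[X])" "q = map (\<lambda>P. eval P t) Ps"
    unfolding lists_image by (auto simp: in_lists_conv_set)
  have PsF: "set P \<subseteq> F" if "P \<in> set Ps" for P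
  proof -
    have "polynomial F P" using Ps(1) that univ_poly_carrier by blast
    then show ?thesis by (rule polynomial_incl)
  qed
  have PsB: "set P \<subseteq> B" if "P \<in> set Ps" for P
    using PsF[OF that] B(2) by blast
  have coeffs_vanish: "eval (map (\<lambda>P. coeff P j) Ps) x = \<zero>" for j
    using eval_map_coeff_eq_zero[OF B(1,3) t PsB] q(4) Ps(2) by simp
  define P0 where "P0 = hd Ps"
  have "Ps \<noteq> []" using q(2) Ps(2) by auto
  then have P0: "P0 \<in> set Ps" "eval P0 t = hd q" unfolding P0_def Ps(2) by (auto simp: hd_map)
  then have "P0 \<noteq> []" using q(3) by auto
  moreover have "polynomial F P0" using Ps(1) P0(1) univ_poly_carrier by blast
  ultimately have lead: "coeff P0 (degree P0) \<noteq> \<zero>"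
    using lead_coeff_simp unfolding polynomial_def by auto
  define r where "r = map (\<lambda>P. coeff P (degree P0)) Ps"
  have "coeff P j \<in> F" if "P \<in> set Ps" for P j
  proof -
    have "coeff P j \<in> set P \<union> {\<zero>}" using coeff_img(3)[of P] by blast
    then show ?thesis using PsF[OF that] subringE(2)[OF F] by auto
  qed
  then have "set r \<subseteq> F" unfolding r_def by auto
  moreover have "length r = Suc n" "hd r \<noteq> \<zero>"
    unfolding r_def using q(2) Ps(2) lead \<open>Ps \<noteq> []\<close> by (auto simp: hd_map P0_def)
  ultimately show ?thesis
    unfolding has_annihilator_of_degree_def using coeffs_vanish[of "degree P0"] r_def by blast
qed

end

context field
begin

lemma fractions_subfield:
  assumes E: "subring E R"
  shows "subfield (fractions E) R"
proof (rule subfieldI'[OF subringI])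
  have Ec: "E \<subseteq> carrier R" using subringE(1)[OF E] .
  show "fractions E \<subseteq> carrier R" unfolding fractions_def by auto
  show "\<one> \<in> fractions E" using subset_fractions[OF E] subringE(3)[OF E] by blast
  fix h assume "h \<in> fractions E"
  then obtain b where h: "h \<in> carrier R" "b \<in> E" "b \<noteq> \<zero>" "h \<otimes> b \<in> E"
    unfolding fractions_def by auto
  have "\<ominus> h \<otimes> b = \<ominus> (h \<otimes> b)" using h Ec by (simp add: l_minus subsetD)
  then show "\<ominus> h \<in> fractions E" unfolding fractions_def using h subringE(5)[OF E] by auto
next
  fix h1 h2 assume "h1 \<in> fractions E" "h2 \<in> fractions E"
  then obtain b1 b2 where h: "h1 \<in> carrier R" "b1 \<in> E" "b1 \<noteq> \<zero>" "h1 \<otimes> b1 \<in> E"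
      "h2 \<in> carrier R" "b2 \<in> E" "b2 \<noteq> \<zero>" "h2 \<otimes> b2 \<in> E"
    unfolding fractions_def by auto
  have c: "b1 \<in> carrier R" "b2 \<in> carrier R" using h subringE(1)[OF E] by auto
  have b: "b1 \<otimes> b2 \<in> E" "b1 \<otimes> b2 \<noteq> \<zero>" using h c subringE(6)[OF E] by (auto simp: integral_iff)
  have "(h1 \<otimes> h2) \<otimes> (b1 \<otimes> b2) = (h1 \<otimes> b1) \<otimes> (h2 \<otimes> b2)" using h c by (simp add: m_ac)
  then show "h1 \<otimes> h2 \<in> fractions E"
    unfolding fractions_def using h b subringE(6)[OF E] by auto
  have "(h1 \<oplus> h2) \<otimes> (b1 \<otimes> b2) = (h1 \<otimes> b1) \<otimes> b2 \<oplus> (h2 \<otimes> b2) \<otimes> b1" using h c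
    by (simp add: m_ac l_distr r_distr)
  then show "h1 \<oplus> h2 \<in> fractions E"
    unfolding fractions_def using h b subringE(6,7)[OF E] by auto
next
  fix k assume "k \<in> fractions E - {\<zero>}"
  then obtain b where k: "k \<in> carrier R" "k \<noteq> \<zero>" "b \<in> E" "b \<noteq> \<zero>" "k \<otimes> b \<in> E"
    unfolding fractions_def by auto
  have unit: "k \<in> Units R" using k field_Units by simp
  have c: "b \<in> carrier R" "inv k \<in> carrier R"
    using k(3) subringE(1)[OF E] Units_inv_closed[OF unit] by auto
  have "inv k \<otimes> (k \<otimes> b) = (inv k \<otimes> k) \<otimes> b" using k(1) c by (simp add: m_assoc)
  also have "\<dots> = b" using Units_l_inv[OF unit] c(1) by simp
  finally have "inv k \<otimes> (k \<otimes> b) \<in> E" using k(3) by simp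
  moreover have "k \<otimes> b \<noteq> \<zero>" using k c by (simp add: integral_iff)
  ultimately show "inv k \<in> fractions E"
    unfolding fractions_def using k(5) c(2) by blast
qed

lemma transcendental_over_simple_extension:
  assumes F: "subfield F R" and x: "x \<in> carrier R" "(algebraic over F) x"
    and t: "t \<in> carrier R" "(transcendental over F) t"
  shows "(transcendental over (simple_extension F x)) t"
proof (rule ccontr)
  let ?Fx = "simple_extension F x"
  assume "\<not> (transcendental over ?Fx) t"
  then have "(algebraic over ?Fx) t" by (simp add: over_def)
  have Fx: "subfield ?Fx R"
    using simple_extension_is_subfield[OF F x(1)] x(2) by simp
  have "finite_dimension F ?Fx"
    using finite_dimensionI[OF dimension_simple_extension[OF F x(1)]] x(2) by simp
  moreover have "finite_dimension ?Fx (simple_extension ?Fx t)"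
    using finite_dimensionI[OF dimension_simple_extension[OF Fx t(1)]] \<open>(algebraic over ?Fx) t\<close> by simp
  ultimately have "finite_dimension F (simple_extension ?Fx t)"
    using telescopic_base_dim(1)[OF F Fx] by blast
  then have "(algebraic over F) t"
    using finite_dimension_imp_algebraic[OF F simple_extension_is_subring[OF subfieldE(1)[OF Fx] t(1)]]
      simple_extension_mem[OF subfieldE(1)[OF Fx] t(1)] by blast
  with t(2) show False by (simp add: over_def)
qed

lemma has_annihilator_descends_from_transcendental_extension:
  assumes F: "subfield F R" and t: "t \<in> carrier R" "(transcendental over F) t"
    and x: "x \<in> carrier R" "(algebraic over F) x"
    and "has_annihilator_of_degree (generate_field R (insert t F)) n x"
  shows "has_annihilator_of_degree F n x"
proof -
  have Fc: "F \<subseteq> carrier R" using subfieldE(3)[OF F] .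
  let ?E = "simple_extension F t"
  have E: "subring ?E R" using simple_extension_is_subring[OF subfieldE(1)[OF F] t(1)] .
  have "insert t F \<subseteq> fractions ?E"
    using simple_extension_mem[OF subfieldE(1)[OF F] t(1)] simple_extension_incl[OF Fc t(1)]
      subset_fractions[OF E] by blast
  then have "generate_field R (insert t F) \<subseteq> fractions ?E"
    using generate_field_min_subfield1[OF _ fractions_subfield[OF E]] Fc t(1) by blast
  then have "has_annihilator_of_degree ?E n x"
    using has_annihilator_clear_denominators[OF E _ x(1)] assms(6) by blast
  moreover have "(transcendental over (simple_extension F x)) t"
    using transcendental_over_simple_extension[OF F x t] .
  ultimately show ?thesis
    using has_annihilator_descends_from_simple_extension[OF subfieldE(1)[OF F]
        simple_extension_is_subring[OF subfieldE(1)[OF F] x(1)] simple_extension_incl[OF Fc x(1)]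
        simple_extension_mem[OF subfieldE(1)[OF F] x(1)] t(1)] by blast
qed

end

section \<open>Ultrafilters as filters\<close>

definition ufilter :: "'s set \<Rightarrow> 's set set \<Rightarrow> 's filter" where
  "ufilter S D = Abs_filter (\<lambda>P. {s \<in> S. P s} \<in> D)"

lemma eventually_ufilter:
  assumes "ultrafilter_on S D"
  shows "eventually P (ufilter S D) \<longleftrightarrow> {s \<in> S. P s} \<in> D"
proof -
  have S: "S \<in> D"
    and inter: "\<And>A B. A \<in> D \<Longrightarrow> B \<in> D \<Longrightarrow> A \<inter> B \<in> D"
    and upward: "\<And>A B. A \<in> D \<Longrightarrow> A \<subseteq> B \<Longrightarrow> B \<subseteq> S \<Longrightarrow> B \<in> D"
    using assms unfolding ultrafilter_on_def by simp_all
  have "is_filter (\<lambda>P. {s \<in> S. P s} \<in> D)"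
  proof
    show "{s \<in> S. True} \<in> D" using S by simp
  next
    fix P Q assume "{s \<in> S. P s} \<in> D" "{s \<in> S. Q s} \<in> D"
    then have "{s \<in> S. P s} \<inter> {s \<in> S. Q s} \<in> D" by (rule inter)
    moreover have "{s \<in> S. P s} \<inter> {s \<in> S. Q s} = {s \<in> S. P s \<and> Q s}" by blast
    ultimately show "{s \<in> S. P s \<and> Q s} \<in> D" by simp
  next
    fix P Q assume "\<forall>s. P s \<longrightarrow> Q s" "{s \<in> S. P s} \<in> D"
    then show "{s \<in> S. Q s} \<in> D" by (elim upward) auto
  qed
  then show ?thesis
    unfolding ufilter_def by (simp add: eventually_Abs_filter)
qed

lemma ufilter_not_bot:
  assumes "ultrafilter_on S D" shows "ufilter S D \<noteq> bot"
  using assms by (simp add: eventually_False[symmetric] eventually_ufilter ultrafilter_on_def)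

lemma eventually_ufilter_not:
  assumes "ultrafilter_on S D"
  shows "eventually (\<lambda>s. \<not> P s) (ufilter S D) \<longleftrightarrow> \<not> eventually P (ufilter S D)"
proof -
  have "S - {s \<in> S. P s} = {s \<in> S. \<not> P s}" by blast
  then have "eventually (\<lambda>s. \<not> P s) (ufilter S D) \<or> eventually P (ufilter S D)"
    using assms unfolding eventually_ufilter[OF assms] ultrafilter_on_def
    by (metis (no_types, lifting) mem_Collect_eq subsetI)
  moreover have "\<not> (eventually (\<lambda>s. \<not> P s) (ufilter S D) \<and> eventually P (ufilter S D))"
    using eventually_conj[of "\<lambda>s. \<not> P s" _ P] ufilter_not_bot[OF assms]
    by (auto simp: eventually_False[symmetric])
  ultimately show ?thesis by blast
qed

section \<open>Ultraproducts of fields\<close>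

locale field_ultraproduct =
  fixes S :: "'s set" and D :: "'s set set" and L :: "'s \<Rightarrow> 'a ring"
  assumes ultrafilter: "ultrafilter_on S D"
    and field_L: "\<And>s. s \<in> S \<Longrightarrow> field (L s)"
begin

abbreviation "U \<equiv> ultraproduct D S L"
abbreviation "cls \<equiv> ulim D S L"
abbreviation "\<U> \<equiv> ufilter S D"

lemma cring_L: "s \<in> S \<Longrightarrow> cring (L s)"
  using field_L field.axioms(1) domain.axioms(1) by blast

lemma ring_L: "s \<in> S \<Longrightarrow> ring (L s)"
  using cring_L cring.axioms(1) by blast

lemmas component_laws = cring.cring_simprules[OF cring_L]

lemma uprodD: "f \<in> uprod S L \<Longrightarrow> s \<in> S \<Longrightarrow> f s \<in> carrier (L s)"
  unfolding uprod_def by auto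

lemma restrict_in_uprod:
  "(\<And>s. s \<in> S \<Longrightarrow> h s \<in> carrier (L s)) \<Longrightarrow> (\<lambda>s\<in>S. h s) \<in> uprod S L"
  unfolding uprod_def by auto

lemma ueq_iff: "ueq D S f g \<longleftrightarrow> (\<forall>\<^sub>F s in \<U>. f s = g s)"
  unfolding ueq_def eventually_ufilter[OF ultrafilter] ..

lemma cls_self: "f \<in> uprod S L \<Longrightarrow> f \<in> cls f"
  unfolding ulim_def ueq_iff by simp

lemma cls_eq_iff:
  assumes "f \<in> uprod S L" "g \<in> uprod S L"
  shows "cls f = cls g \<longleftrightarrow> (\<forall>\<^sub>F s in \<U>. f s = g s)"
proof
  assume "cls f = cls g"
  then have "f \<in> cls g" using cls_self[OF assms(1)] by simp
  then show "\<forall>\<^sub>F s in \<U>. f s = g s"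
    unfolding ulim_def ueq_iff by (auto elim: eventually_mono)
next
  assume fg: "\<forall>\<^sub>F s in \<U>. f s = g s"
  have "(\<forall>\<^sub>F s in \<U>. f s = h s) \<longleftrightarrow> (\<forall>\<^sub>F s in \<U>. g s = h s)" for h
    using fg by (auto elim: eventually_elim2)
  then show "cls f = cls g"
    unfolding ulim_def ueq_iff by simp
qed

lemma eventually_in_index: "\<forall>\<^sub>F s in \<U>. s \<in> S"
  using ultrafilter by (simp add: eventually_ufilter ultrafilter_on_def)

lemma cls_cong:
  assumes "f \<in> uprod S L" "g \<in> uprod S L" "\<And>s. s \<in> S \<Longrightarrow> f s = g s"
  shows "cls f = cls g"
  using assms eventually_in_index by (simp add: cls_eq_iff eventually_mono)

lemma urep_cls:
  assumes "f \<in> uprod S L"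
  shows "urep (cls f) \<in> uprod S L" "\<forall>\<^sub>F s in \<U>. urep (cls f) s = f s"
proof -
  have "urep (cls f) \<in> cls f"
    unfolding urep_def using someI[of "\<lambda>h. h \<in> cls f", OF cls_self[OF assms]] .
  then show "urep (cls f) \<in> uprod S L" "\<forall>\<^sub>F s in \<U>. urep (cls f) s = f s"
    unfolding ulim_def ueq_iff by (auto elim: eventually_mono)
qed

lemma cls_urep_binop:
  assumes f: "f \<in> uprod S L" and g: "g \<in> uprod S L"
    and closed: "\<And>s a b. \<lbrakk>s \<in> S; a \<in> carrier (L s); b \<in> carrier (L s)\<rbrakk>
                   \<Longrightarrow> op s a b \<in> carrier (L s)"
  shows "cls (\<lambda>s\<in>S. op s (urep (cls f) s) (urep (cls g) s)) = cls (\<lambda>s\<in>S. op s (f s) (g s))"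
proof -
  have "\<forall>\<^sub>F s in \<U>. op s (urep (cls f) s) (urep (cls g) s) = op s (f s) (g s)"
    using urep_cls(2)[OF f] urep_cls(2)[OF g] by eventually_elim simp
  then show ?thesis
    using f g urep_cls(1)[OF f] urep_cls(1)[OF g] eventually_in_index
    by (subst cls_eq_iff) (auto intro!: restrict_in_uprod closed dest: uprodD elim: eventually_elim2)
qed

lemma add_cls:
  assumes "f \<in> uprod S L" "g \<in> uprod S L"
  shows "cls f \<oplus>\<^bsub>U\<^esub> cls g = cls (\<lambda>s\<in>S. f s \<oplus>\<^bsub>L s\<^esub> g s)"
  unfolding ultraproduct_def uadd_def using assms
  by (simp add: cls_urep_binop[of f g "\<lambda>s a b. a \<oplus>\<^bsub>L s\<^esub> b"] component_laws(1))

lemma mult_cls: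
  assumes "f \<in> uprod S L" "g \<in> uprod S L"
  shows "cls f \<otimes>\<^bsub>U\<^esub> cls g = cls (\<lambda>s\<in>S. f s \<otimes>\<^bsub>L s\<^esub> g s)"
  unfolding ultraproduct_def umult_def using assms
  by (simp add: cls_urep_binop[of f g "\<lambda>s a b. a \<otimes>\<^bsub>L s\<^esub> b"] component_laws(5))

lemma zero_ultraproduct: "\<zero>\<^bsub>U\<^esub> = cls (\<lambda>s\<in>S. \<zero>\<^bsub>L s\<^esub>)"
  unfolding ultraproduct_def uzero_def by simp

lemma one_ultraproduct: "\<one>\<^bsub>U\<^esub> = cls (\<lambda>s\<in>S. \<one>\<^bsub>L s\<^esub>)"
  unfolding ultraproduct_def uone_def by simp

lemma carrier_ultraproduct: "carrier U = cls ` uprod S L"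
  unfolding ultraproduct_def by simp

lemma ultraproduct_cases:
  assumes "x \<in> carrier U" obtains f where "f \<in> uprod S L" "x = cls f"
  using assms carrier_ultraproduct by auto

lemma cls_in_carrier: "f \<in> uprod S L \<Longrightarrow> cls f \<in> carrier U"
  using carrier_ultraproduct by auto

lemma uprod_closed [intro]:
  "(\<lambda>s\<in>S. \<zero>\<^bsub>L s\<^esub>) \<in> uprod S L"
  "(\<lambda>s\<in>S. \<one>\<^bsub>L s\<^esub>) \<in> uprod S L"
  "f \<in> uprod S L \<Longrightarrow> (\<lambda>s\<in>S. \<ominus>\<^bsub>L s\<^esub> f s) \<in> uprod S L"
  "f \<in> uprod S L \<Longrightarrow> g \<in> uprod S L \<Longrightarrow> (\<lambda>s\<in>S. f s \<oplus>\<^bsub>L s\<^esub> g s) \<in> uprod S L"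
  "f \<in> uprod S L \<Longrightarrow> g \<in> uprod S L \<Longrightarrow> (\<lambda>s\<in>S. f s \<otimes>\<^bsub>L s\<^esub> g s) \<in> uprod S L"
  by (auto intro!: restrict_in_uprod component_laws dest: uprodD)

lemmas ultraproduct_ops = add_cls mult_cls zero_ultraproduct one_ultraproduct uprod_closed cls_in_carrier

lemma abelian_group_ultraproduct: "abelian_group U"
proof (rule abelian_groupI)
  fix x y assume "x \<in> carrier U" "y \<in> carrier U"
  then show "x \<oplus>\<^bsub>U\<^esub> y \<in> carrier U"
    by (elim ultraproduct_cases) (simp add: ultraproduct_ops)
next
  show "\<zero>\<^bsub>U\<^esub> \<in> carrier U" by (simp add: ultraproduct_ops)
next
  fix x y z assume "x \<in> carrier U" "y \<in> carrier U" "z \<in> carrier U"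
  then show "(x \<oplus>\<^bsub>U\<^esub> y) \<oplus>\<^bsub>U\<^esub> z = x \<oplus>\<^bsub>U\<^esub> (y \<oplus>\<^bsub>U\<^esub> z)"
    by (elim ultraproduct_cases)
      (simp only: ultraproduct_ops, rule cls_cong; auto intro!: restrict_in_uprod component_laws dest: uprodD)
next
  fix x y assume "x \<in> carrier U" "y \<in> carrier U"
  then show "x \<oplus>\<^bsub>U\<^esub> y = y \<oplus>\<^bsub>U\<^esub> x"
    by (elim ultraproduct_cases)
      (simp only: ultraproduct_ops, rule cls_cong; auto intro!: restrict_in_uprod component_laws dest: uprodD)
next
  fix x assume "x \<in> carrier U"
  then show "\<zero>\<^bsub>U\<^esub> \<oplus>\<^bsub>U\<^esub> x = x"
    by (elim ultraproduct_cases)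
      (simp only: ultraproduct_ops, rule cls_cong; auto intro!: restrict_in_uprod component_laws dest: uprodD)
next
  fix x assume "x \<in> carrier U"
  then obtain f where f: "f \<in> uprod S L" "x = cls f" by (elim ultraproduct_cases)
  have "cls (\<lambda>s\<in>S. \<ominus>\<^bsub>L s\<^esub> f s) \<oplus>\<^bsub>U\<^esub> x = \<zero>\<^bsub>U\<^esub>"
    unfolding f(2) by (simp only: ultraproduct_ops f(1))
      (rule cls_cong; use f(1) in \<open>auto intro!: restrict_in_uprod component_laws dest: uprodD\<close>)
  then show "\<exists>y\<in>carrier U. y \<oplus>\<^bsub>U\<^esub> x = \<zero>\<^bsub>U\<^esub>"
    using cls_in_carrier[OF uprod_closed(3)[OF f(1)]] by blast
qed

lemma comm_monoid_ultraproduct: "comm_monoid U"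
proof (rule comm_monoidI)
  fix x y assume "x \<in> carrier U" "y \<in> carrier U"
  then show "x \<otimes>\<^bsub>U\<^esub> y \<in> carrier U"
    by (elim ultraproduct_cases) (simp add: ultraproduct_ops)
next
  show "\<one>\<^bsub>U\<^esub> \<in> carrier U" by (simp add: ultraproduct_ops)
next
  fix x y z assume "x \<in> carrier U" "y \<in> carrier U" "z \<in> carrier U"
  then show "(x \<otimes>\<^bsub>U\<^esub> y) \<otimes>\<^bsub>U\<^esub> z = x \<otimes>\<^bsub>U\<^esub> (y \<otimes>\<^bsub>U\<^esub> z)"
    by (elim ultraproduct_cases)
      (simp only: ultraproduct_ops, rule cls_cong; auto intro!: restrict_in_uprod component_laws dest: uprodD)
next
  fix x y assume "x \<in> carrier U" "y \<in> carrier U"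
  then show "x \<otimes>\<^bsub>U\<^esub> y = y \<otimes>\<^bsub>U\<^esub> x"
    by (elim ultraproduct_cases)
      (simp only: ultraproduct_ops, rule cls_cong; auto intro!: restrict_in_uprod component_laws dest: uprodD)
next
  fix x assume "x \<in> carrier U"
  then show "\<one>\<^bsub>U\<^esub> \<otimes>\<^bsub>U\<^esub> x = x"
    by (elim ultraproduct_cases)
      (simp only: ultraproduct_ops, rule cls_cong; auto intro!: restrict_in_uprod component_laws dest: uprodD)
qed

lemma cring_ultraproduct: "cring U"
proof (rule cringI[OF abelian_group_ultraproduct comm_monoid_ultraproduct])
  fix x y z assume "x \<in> carrier U" "y \<in> carrier U" "z \<in> carrier U"
  then show "(x \<oplus>\<^bsub>U\<^esub> y) \<otimes>\<^bsub>U\<^esub> z = x \<otimes>\<^bsub>U\<^esub> z \<oplus>\<^bsub>U\<^esub> y \<otimes>\<^bsub>U\<^esub> z"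
    by (elim ultraproduct_cases)
      (simp only: ultraproduct_ops, rule cls_cong; auto intro!: restrict_in_uprod component_laws dest: uprodD)
qed

lemma cls_eq_zero_iff:
  assumes "f \<in> uprod S L"
  shows "cls f = \<zero>\<^bsub>U\<^esub> \<longleftrightarrow> (\<forall>\<^sub>F s in \<U>. f s = \<zero>\<^bsub>L s\<^esub>)"
  unfolding zero_ultraproduct using assms eventually_in_index
  by (simp add: cls_eq_iff uprod_closed) (auto elim: eventually_mono eventually_elim2)

lemma cls_neq_zero_iff:
  assumes "f \<in> uprod S L"
  shows "cls f \<noteq> \<zero>\<^bsub>U\<^esub> \<longleftrightarrow> (\<forall>\<^sub>F s in \<U>. f s \<noteq> \<zero>\<^bsub>L s\<^esub>)"
  using cls_eq_zero_iff[OF assms] eventually_ufilter_not[OF ultrafilter] by simp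

(* inv is junk on \<zero> (not necessarily in the carrier), so zero components are kept as \<zero>. *)
definition componentwise_inv :: "('s \<Rightarrow> 'a) \<Rightarrow> ('s \<Rightarrow> 'a)" where
  "componentwise_inv f = (\<lambda>s\<in>S. if f s = \<zero>\<^bsub>L s\<^esub> then \<zero>\<^bsub>L s\<^esub> else inv\<^bsub>L s\<^esub> f s)"

lemma componentwise_inv_in_uprod: "f \<in> uprod S L \<Longrightarrow> componentwise_inv f \<in> uprod S L"
  unfolding componentwise_inv_def
  by (intro restrict_in_uprod)
    (auto dest: uprodD intro: field.field_Units[OF field_L, THEN equalityD2, THEN subsetD]
      monoid.Units_inv_closed[OF ring.axioms(2)[OF ring_L]] component_laws(2))

lemma cls_mult_componentwise_inv:
  assumes f: "f \<in> uprod S L" and nonzero: "cls f \<noteq> \<zero>\<^bsub>U\<^esub>"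
  shows "cls f \<otimes>\<^bsub>U\<^esub> cls (componentwise_inv f) = \<one>\<^bsub>U\<^esub>"
proof -
  have "f s \<otimes>\<^bsub>L s\<^esub> componentwise_inv f s = \<one>\<^bsub>L s\<^esub>" if "s \<in> S" "f s \<noteq> \<zero>\<^bsub>L s\<^esub>" for s
    using that field.field_Units[OF field_L[OF that(1)]] uprodD[OF f that(1)]
      monoid.Units_r_inv[OF ring.axioms(2)[OF ring_L[OF that(1)]]]
    unfolding componentwise_inv_def by auto
  then have "\<forall>\<^sub>F s in \<U>. f s \<otimes>\<^bsub>L s\<^esub> componentwise_inv f s = \<one>\<^bsub>L s\<^esub>"
    using nonzero eventually_in_index unfolding cls_neq_zero_iff[OF f]
    by (auto elim: eventually_elim2)
  then show ?thesis
    using f componentwise_inv_in_uprod[OF f] eventually_in_index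
    by (simp add: mult_cls one_ultraproduct cls_eq_iff uprod_closed) (auto elim: eventually_elim2)
qed

lemma field_ultraproduct: "field U"
proof (rule cring.cring_fieldI2[OF cring_ultraproduct])
  have "\<forall>\<^sub>F s in \<U>. (\<lambda>s\<in>S. \<one>\<^bsub>L s\<^esub>) s \<noteq> \<zero>\<^bsub>L s\<^esub>"
    using eventually_in_index
    by (rule eventually_mono) (simp add: domain.one_not_zero[OF field.axioms(1)[OF field_L]])
  then show "\<zero>\<^bsub>U\<^esub> \<noteq> \<one>\<^bsub>U\<^esub>"
    unfolding one_ultraproduct using cls_neq_zero_iff[OF uprod_closed(2)] by metis
next
  fix a assume "a \<in> carrier U" "a \<noteq> \<zero>\<^bsub>U\<^esub>"
  then show "\<exists>b\<in>carrier U. a \<otimes>\<^bsub>U\<^esub> b = \<one>\<^bsub>U\<^esub>"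
    by (elim ultraproduct_cases)
      (metis cls_in_carrier cls_mult_componentwise_inv componentwise_inv_in_uprod)
qed

lemma inv_cls:
  assumes "f \<in> uprod S L" "cls f \<noteq> \<zero>\<^bsub>U\<^esub>"
  shows "inv\<^bsub>U\<^esub> cls f = cls (componentwise_inv f)"
  using comm_monoid.comm_inv_char[OF cring.axioms(2)[OF cring_ultraproduct]] assms
    cls_mult_componentwise_inv cls_in_carrier componentwise_inv_in_uprod by blast

lemma neg_cls:
  assumes f: "f \<in> uprod S L"
  shows "\<ominus>\<^bsub>U\<^esub> cls f = cls (\<lambda>s\<in>S. \<ominus>\<^bsub>L s\<^esub> f s)"
proof -
  have "cls (\<lambda>s\<in>S. \<ominus>\<^bsub>L s\<^esub> f s) \<oplus>\<^bsub>U\<^esub> cls f = \<zero>\<^bsub>U\<^esub>"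
    by (simp only: add_cls zero_ultraproduct uprod_closed f)
      (rule cls_cong; use f in \<open>auto intro!: restrict_in_uprod component_laws dest: uprodD\<close>)
  then show ?thesis
    using cring.axioms(1)[OF cring_ultraproduct, THEN ring.axioms(1), THEN abelian_group.minus_equality]
      cls_in_carrier f uprod_closed(3) by blast
qed

sublocale U: field U by (rule field_ultraproduct)

lemma pow_cls:
  assumes f: "f \<in> uprod S L"
  shows "cls f [^]\<^bsub>U\<^esub> (n::nat) = cls (\<lambda>s\<in>S. f s [^]\<^bsub>L s\<^esub> n)"
proof (induction n)
  case 0
  show ?case using one_ultraproduct by (simp add: restrict_def)
next
  case (Suc n)
  have pow: "(\<lambda>s\<in>S. f s [^]\<^bsub>L s\<^esub> n) \<in> uprod S L"
    using f by (intro restrict_in_uprod) (auto dest: uprodD intro: monoid.nat_pow_closed[OF ring.axioms(2)[OF ring_L]])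
  have "cls f [^]\<^bsub>U\<^esub> Suc n = cls (\<lambda>s\<in>S. f s [^]\<^bsub>L s\<^esub> n) \<otimes>\<^bsub>U\<^esub> cls f"
    by (simp only: nat_pow_Suc Suc.IH)
  also have "\<dots> = cls (\<lambda>s\<in>S. f s [^]\<^bsub>L s\<^esub> Suc n)"
    unfolding mult_cls[OF pow f] by (rule cls_cong; use pow f in \<open>auto intro!: restrict_in_uprod
        monoid.nat_pow_closed[OF ring.axioms(2)[OF ring_L]] component_laws dest: uprodD\<close>)
  finally show ?case .
qed

lemma eval_cls:
  assumes fs: "set fs \<subseteq> uprod S L" and x: "x \<in> uprod S L"
  shows "U.eval (map cls fs) (cls x) = cls (\<lambda>s\<in>S. ring.eval (L s) (map (\<lambda>f. f s) fs) (x s))"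
  using fs
proof (induction fs)
  case Nil
  have "(\<lambda>s\<in>S. ring.eval (L s) (map (\<lambda>f. f s) []) (x s)) = (\<lambda>s\<in>S. \<zero>\<^bsub>L s\<^esub>)"
    by (rule restrict_ext) (simp add: ring.eval.simps(1)[OF ring_L])
  then show ?case by (simp add: zero_ultraproduct restrict_def)
next
  case (Cons f fs)
  then have f: "f \<in> uprod S L" and fs: "set fs \<subseteq> uprod S L" by auto
  have ev: "(\<lambda>s\<in>S. ring.eval (L s) (map (\<lambda>f. f s) gs) (x s)) \<in> uprod S L"
    if "set gs \<subseteq> uprod S L" for gs
    using that x by (intro restrict_in_uprod ring.eval_in_carrier[OF ring_L]) (auto dest: uprodD)
  have pow: "(\<lambda>s\<in>S. x s [^]\<^bsub>L s\<^esub> length fs) \<in> uprod S L"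
    using x by (intro restrict_in_uprod) (auto dest: uprodD intro: monoid.nat_pow_closed[OF ring.axioms(2)[OF ring_L]])
  have "U.eval (map cls (f # fs)) (cls x)
      = cls f \<otimes>\<^bsub>U\<^esub> cls x [^]\<^bsub>U\<^esub> length fs \<oplus>\<^bsub>U\<^esub> U.eval (map cls fs) (cls x)"
    by simp
  also have "\<dots> = cls (\<lambda>s\<in>S. ring.eval (L s) (map (\<lambda>f. f s) (f # fs)) (x s))"
    unfolding Cons.IH[OF fs] pow_cls[OF x] mult_cls[OF f pow] add_cls[OF uprod_closed(5)[OF f pow] ev[OF fs]]
    by (rule cls_cong[OF uprod_closed(4)[OF uprod_closed(5)[OF f pow] ev[OF fs]] ev[OF Cons.prems]])
      (simp add: ring.eval.simps(2)[OF ring_L])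
  finally show ?case .
qed

lemma PiE_subset_uprod:
  "(\<And>s. s \<in> S \<Longrightarrow> A s \<subseteq> carrier (L s)) \<Longrightarrow> (\<Pi>\<^sub>E s\<in>S. A s) \<subseteq> uprod S L"
  unfolding uprod_def by (auto simp: PiE_def Pi_def)

lemma cls_in_usub: "f \<in> (\<Pi>\<^sub>E s\<in>S. A s) \<Longrightarrow> cls f \<in> usub D S L A"
  unfolding usub_def by (rule imageI)

lemma usub_mono: "(\<And>s. s \<in> S \<Longrightarrow> A s \<subseteq> B s) \<Longrightarrow> usub D S L A \<subseteq> usub D S L B"
  unfolding usub_def by (intro image_mono PiE_mono)

lemma usub_subring:
  assumes A: "\<And>s. s \<in> S \<Longrightarrow> subring (A s) (L s)"
  shows "subring (usub D S L A) U"
proof -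
  have up: "(\<Pi>\<^sub>E s\<in>S. A s) \<subseteq> uprod S L"
    using PiE_subset_uprod subringE(1)[OF A] by blast
  show ?thesis
  proof (rule U.subringI)
    show "usub D S L A \<subseteq> carrier U"
      unfolding usub_def using up cls_in_carrier by blast
    show "\<one>\<^bsub>U\<^esub> \<in> usub D S L A"
      unfolding one_ultraproduct using subringE(3)[OF A] by (intro cls_in_usub) auto
  next
    fix h assume "h \<in> usub D S L A"
    then obtain f where f: "f \<in> (\<Pi>\<^sub>E s\<in>S. A s)" "h = cls f" unfolding usub_def by auto
    show "\<ominus>\<^bsub>U\<^esub> h \<in> usub D S L A"
      unfolding f(2) neg_cls[OF up[THEN subsetD, OF f(1)]]
      using f(1) subringE(5)[OF A] by (intro cls_in_usub) auto
  next
    fix h1 h2 assume "h1 \<in> usub D S L A" "h2 \<in> usub D S L A"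
    then obtain f1 f2 where f: "f1 \<in> (\<Pi>\<^sub>E s\<in>S. A s)" "h1 = cls f1" "f2 \<in> (\<Pi>\<^sub>E s\<in>S. A s)" "h2 = cls f2"
      unfolding usub_def by auto
    then have f_up: "f1 \<in> uprod S L" "f2 \<in> uprod S L" using up by auto
    show "h1 \<otimes>\<^bsub>U\<^esub> h2 \<in> usub D S L A"
      unfolding f(2,4) mult_cls[OF f_up]
      using PiE_mem[OF f(1)] PiE_mem[OF f(3)] by (intro cls_in_usub) (simp add: subringE(6)[OF A])
    show "h1 \<oplus>\<^bsub>U\<^esub> h2 \<in> usub D S L A"
      unfolding f(2,4) add_cls[OF f_up]
      using PiE_mem[OF f(1)] PiE_mem[OF f(3)] by (intro cls_in_usub) (simp add: subringE(7)[OF A])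
  qed
qed

lemma usub_subfield:
  assumes A: "\<And>s. s \<in> S \<Longrightarrow> subfield (A s) (L s)"
  shows "subfield (usub D S L A) U"
proof (rule U.subfieldI'[OF usub_subring[OF subfieldE(1)[OF A]]])
  fix k assume k: "k \<in> usub D S L A - {\<zero>\<^bsub>U\<^esub>}"
  then obtain f where f: "f \<in> (\<Pi>\<^sub>E s\<in>S. A s)" "k = cls f" unfolding usub_def by auto
  have f_up: "f \<in> uprod S L"
    using f(1) PiE_subset_uprod subfieldE(3)[OF A] by blast
  have "componentwise_inv f s \<in> A s" if s: "s \<in> S" for s
  proof (cases "f s = \<zero>\<^bsub>L s\<^esub>")
    case True
    then show ?thesis
      unfolding componentwise_inv_def using s subringE(2)[OF subfieldE(1)[OF A[OF s]]] by simp
  next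
    case False
    then show ?thesis
      unfolding componentwise_inv_def using s f(1) ring.subfield_m_inv(1)[OF ring_L[OF s] A[OF s]] by auto
  qed
  then have "componentwise_inv f \<in> (\<Pi>\<^sub>E s\<in>S. A s)"
    unfolding componentwise_inv_def by auto
  then show "inv\<^bsub>U\<^esub> k \<in> usub D S L A"
    using inv_cls[OF f_up] k f(2) cls_in_usub by auto
qed

lemma eventually_choose_lists:
  assumes ev: "\<forall>\<^sub>F s in \<U>. \<exists>r. set r \<subseteq> A s \<and> length r = m \<and> P s r"
    and nonempty: "\<And>s. s \<in> S \<Longrightarrow> A s \<noteq> {}"
  obtains fs where "set fs \<subseteq> (\<Pi>\<^sub>E s\<in>S. A s)" "length fs = m"
    "\<forall>\<^sub>F s in \<U>. P s (map (\<lambda>f. f s) fs)"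
proof -
  define good where "good s r \<longleftrightarrow> set r \<subseteq> A s \<and> length r = m \<and> P s r" for s r
  define r where "r s = (if \<exists>r. good s r then SOME r. good s r else replicate m (SOME a. a \<in> A s))" for s
  have r_good: "good s (r s)" if "\<exists>r. good s r" for s
    unfolding r_def using that someI_ex[OF that] by simp
  have r_A: "set (r s) \<subseteq> A s" "length (r s) = m" if "s \<in> S" for s
    using r_good[of s] some_in_eq[of "A s"] nonempty[OF that]
    unfolding r_def good_def by (auto split: if_splits)
  define fs where "fs = map (\<lambda>i. \<lambda>s\<in>S. r s ! i) [0..<m]"
  have "r s ! i \<in> A s" if "s \<in> S" "i < m" for s i
    using r_A[OF that(1)] that(2) nth_mem by blast
  then have "set fs \<subseteq> (\<Pi>\<^sub>E s\<in>S. A s)"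
    unfolding fs_def by auto
  moreover have "length fs = m" unfolding fs_def by simp
  moreover have map_fs: "map (\<lambda>f. f s) fs = r s" if "s \<in> S" for s
    using r_A(2)[OF that] that map_nth[of "r s"] unfolding fs_def by (simp add: o_def)
  from ev eventually_in_index have "\<forall>\<^sub>F s in \<U>. P s (map (\<lambda>f. f s) fs)"
  proof eventually_elim
    case (elim s)
    then have "good s (r s)" using r_good unfolding good_def by blast
    then show ?case using map_fs[OF elim(2)] unfolding good_def by simp
  qed
  ultimately show ?thesis using that by blast
qed

lemma eval_cls_eq_zero_iff:
  assumes fs: "set fs \<subseteq> uprod S L" and x: "x \<in> uprod S L"
  shows "U.eval (map cls fs) (cls x) = \<zero>\<^bsub>U\<^esub>
           \<longleftrightarrow> (\<forall>\<^sub>F s in \<U>. ring.eval (L s) (map (\<lambda>f. f s) fs) (x s) = \<zero>\<^bsub>L s\<^esub>)"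
proof -
  have ev: "(\<lambda>s\<in>S. ring.eval (L s) (map (\<lambda>f. f s) fs) (x s)) \<in> uprod S L"
    using fs x by (intro restrict_in_uprod ring.eval_in_carrier[OF ring_L]) (auto dest: uprodD)
  show ?thesis
    unfolding eval_cls[OF fs x] cls_eq_zero_iff[OF ev] using eventually_in_index
    by (auto elim: eventually_elim2)
qed

lemma hd_cls_neq_zero_iff:
  assumes fs: "set fs \<subseteq> uprod S L" "fs \<noteq> []"
  shows "hd (map cls fs) \<noteq> \<zero>\<^bsub>U\<^esub>
           \<longleftrightarrow> (\<forall>\<^sub>F s in \<U>. hd (map (\<lambda>f. f s) fs) \<noteq> \<zero>\<^bsub>L s\<^esub>)"
proof -
  have "hd fs \<in> uprod S L" using fs hd_in_set by blast
  then show ?thesis using cls_neq_zero_iff[of "hd fs"] fs(2) by (simp add: hd_map)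
qed

lemma has_annihilator_of_degree_L_iff:
  assumes "s \<in> S"
  shows "ring.has_annihilator_of_degree (L s) K n y \<longleftrightarrow>
           (\<exists>r. set r \<subseteq> K \<and> length r = Suc n
                 \<and> hd r \<noteq> \<zero>\<^bsub>L s\<^esub> \<and> ring.eval (L s) r y = \<zero>\<^bsub>L s\<^esub>)"
  using ring.has_annihilator_of_degree_def[OF ring_L[OF assms]] .

lemma has_annihilator_clsD:
  assumes A: "\<And>s. s \<in> S \<Longrightarrow> A s \<subseteq> carrier (L s)" and x: "x \<in> uprod S L"
    and "U.has_annihilator_of_degree (usub D S L A) n (cls x)"
  shows "\<forall>\<^sub>F s in \<U>. ring.has_annihilator_of_degree (L s) (A s) n (x s)"
proof -
  obtain p where p: "set p \<subseteq> usub D S L A" "length p = Suc n" "hd p \<noteq> \<zero>\<^bsub>U\<^esub>"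
      "U.eval p (cls x) = \<zero>\<^bsub>U\<^esub>"
    using assms(3) unfolding U.has_annihilator_of_degree_def by blast
  from p(1) have "p \<in> lists (cls ` (\<Pi>\<^sub>E s\<in>S. A s))" unfolding usub_def by auto
  then obtain fs where fs: "set fs \<subseteq> (\<Pi>\<^sub>E s\<in>S. A s)" "p = map cls fs"
    unfolding lists_image by (auto simp: in_lists_conv_set)
  have fs_up: "set fs \<subseteq> uprod S L" and "fs \<noteq> []"
    using fs PiE_subset_uprod[OF A] p(2) by auto
  have "\<forall>\<^sub>F s in \<U>. ring.eval (L s) (map (\<lambda>f. f s) fs) (x s) = \<zero>\<^bsub>L s\<^esub>"
    using p(4) eval_cls_eq_zero_iff[OF fs_up x] fs(2) by simp
  moreover have "\<forall>\<^sub>F s in \<U>. hd (map (\<lambda>f. f s) fs) \<noteq> \<zero>\<^bsub>L s\<^esub>"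
    using p(3) hd_cls_neq_zero_iff[OF fs_up \<open>fs \<noteq> []\<close>] fs(2) by simp
  ultimately show ?thesis
    using eventually_in_index
  proof eventually_elim
    case (elim s)
    moreover have "set (map (\<lambda>f. f s) fs) \<subseteq> A s" using fs(1) elim(3) by (auto dest: PiE_mem)
    ultimately show ?case
      unfolding has_annihilator_of_degree_L_iff[OF elim(3)] using p(2) fs(2) by (intro exI) auto
  qed
qed

lemma has_annihilator_clsI:
  assumes A: "\<And>s. s \<in> S \<Longrightarrow> subring (A s) (L s)" and x: "x \<in> uprod S L"
    and "\<forall>\<^sub>F s in \<U>. ring.has_annihilator_of_degree (L s) (A s) n (x s)"
  shows "U.has_annihilator_of_degree (usub D S L A) n (cls x)"
proof -
  have roots: "\<forall>\<^sub>F s in \<U>. \<exists>r. set r \<subseteq> A s \<and> length r = Suc n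
          \<and> (hd r \<noteq> \<zero>\<^bsub>L s\<^esub> \<and> ring.eval (L s) r (x s) = \<zero>\<^bsub>L s\<^esub>)"
    using assms(3) eventually_in_index
    by (auto simp: has_annihilator_of_degree_L_iff elim: eventually_elim2)
  obtain fs where fs: "set fs \<subseteq> (\<Pi>\<^sub>E s\<in>S. A s)" "length fs = Suc n"
      "\<forall>\<^sub>F s in \<U>. hd (map (\<lambda>f. f s) fs) \<noteq> \<zero>\<^bsub>L s\<^esub>
                    \<and> ring.eval (L s) (map (\<lambda>f. f s) fs) (x s) = \<zero>\<^bsub>L s\<^esub>"
    using eventually_choose_lists[where P="\<lambda>s r. hd r \<noteq> \<zero>\<^bsub>L s\<^esub> \<and> ring.eval (L s) r (x s) = \<zero>\<^bsub>L s\<^esub>",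
        OF roots] subringE(2)[OF A] by blast
  have fs_up: "set fs \<subseteq> uprod S L" and "fs \<noteq> []"
    using fs PiE_subset_uprod[OF subringE(1)[OF A]] by auto
  have "set (map cls fs) \<subseteq> usub D S L A" using fs(1) cls_in_usub by auto
  moreover have "hd (map cls fs) \<noteq> \<zero>\<^bsub>U\<^esub>"
    unfolding hd_cls_neq_zero_iff[OF fs_up \<open>fs \<noteq> []\<close>] using fs(3) by (rule eventually_mono) simp
  moreover have "U.eval (map cls fs) (cls x) = \<zero>\<^bsub>U\<^esub>"
    unfolding eval_cls_eq_zero_iff[OF fs_up x] using fs(3) by (rule eventually_mono) simp
  ultimately show ?thesis
    unfolding U.has_annihilator_of_degree_def using fs(2) by (intro exI[of _ "map cls fs"]) auto
qed

lemma algebraic_cls_iff: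
  assumes A: "\<And>s. s \<in> S \<Longrightarrow> subring (A s) (L s)" and x: "x \<in> uprod S L"
  shows "U.algebraic (usub D S L A) (cls x)
           \<longleftrightarrow> (\<exists>n. \<forall>\<^sub>F s in \<U>. ring.has_annihilator_of_degree (L s) (A s) n (x s))"
proof -
  have "U.algebraic (usub D S L A) (cls x) \<longleftrightarrow> (\<exists>n. U.has_annihilator_of_degree (usub D S L A) n (cls x))"
    using U.algebraic_iff_has_annihilator[OF usub_subring[OF A] cls_in_carrier[OF x]] by (simp add: over_def)
  also have "\<dots> \<longleftrightarrow> (\<exists>n. \<forall>\<^sub>F s in \<U>. ring.has_annihilator_of_degree (L s) (A s) n (x s))"
    using has_annihilator_clsD[OF subringE(1)[OF A] x] has_annihilator_clsI[OF A x] by blast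
  finally show ?thesis .
qed

lemma generate_field_subset_usub:
  assumes H: "\<And>s. s \<in> S \<Longrightarrow> H s \<subseteq> carrier (L s)" and G: "G \<subseteq> usub D S L H"
  shows "generate_field U G \<subseteq> usub D S L (\<lambda>s. generate_field (L s) (H s))"
proof -
  have sub: "subfield (usub D S L (\<lambda>s. generate_field (L s) (H s))) U"
    by (rule usub_subfield) (rule field.generate_field_is_subfield[OF field_L H])
  have "usub D S L H \<subseteq> usub D S L (\<lambda>s. generate_field (L s) (H s))"
    by (rule usub_mono) (auto intro: generate_field.incl)
  with G have G_sub: "G \<subseteq> usub D S L (\<lambda>s. generate_field (L s) (H s))" by (rule subset_trans)
  then have "G \<subseteq> carrier U" using subfieldE(3)[OF sub] by (rule subset_trans)
  then show ?thesis by (rule U.generate_field_min_subfield1[OF _ sub G_sub])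
qed

lemma algebraic_descends_from_transcendental_extension:
  assumes F: "\<And>s. s \<in> S \<Longrightarrow> subfield (F s) (L s)"
    and t: "\<And>s. s \<in> S \<Longrightarrow> t s \<in> carrier (L s)"
      "\<And>s. s \<in> S \<Longrightarrow> ring.transcendental (L s) (F s) (t s)"
    and x: "x \<in> (\<Pi>\<^sub>E s\<in>S. alg_in (L s) (F s))"
    and alg: "U.algebraic (generate_field U (insert (cls (restrict t S)) (usub D S L F))) (cls x)"
  shows "U.algebraic (usub D S L F) (cls x)"
proof -
  define M where "M s = generate_field (L s) (insert (t s) (F s))" for s
  have Fc: "insert (t s) (F s) \<subseteq> carrier (L s)" if "s \<in> S" for s
    using t(1)[OF that] subfieldE(3)[OF F[OF that]] by blast
  have M: "subring (M s) (L s)" if "s \<in> S" for s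
    unfolding M_def using field.generate_field_is_subfield[OF field_L[OF that] Fc[OF that]] subfieldE(1) by blast
  have x_alg: "x s \<in> carrier (L s)" "ring.algebraic (L s) (F s) (x s)" if "s \<in> S" for s
    using x that unfolding alg_in_def by (auto dest: PiE_mem)
  then have x_up: "x \<in> uprod S L"
    using x unfolding uprod_def by (auto simp: PiE_def)
  have "cls (restrict t S) \<in> usub D S L (\<lambda>s. insert (t s) (F s))"
    by (rule cls_in_usub) auto
  moreover have "usub D S L F \<subseteq> usub D S L (\<lambda>s. insert (t s) (F s))"
    by (rule usub_mono) auto
  ultimately have "insert (cls (restrict t S)) (usub D S L F) \<subseteq> usub D S L (\<lambda>s. insert (t s) (F s))"
    by blast
  then have "generate_field U (insert (cls (restrict t S)) (usub D S L F)) \<subseteq> usub D S L M"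
    unfolding M_def using generate_field_subset_usub[OF Fc] by blast
  then have "U.algebraic (usub D S L M) (cls x)"
    using U.algebraic_mono alg by (simp add: over_def)
  then obtain n where "\<forall>\<^sub>F s in \<U>. ring.has_annihilator_of_degree (L s) (M s) n (x s)"
    using algebraic_cls_iff[OF M x_up] by blast
  then have "\<forall>\<^sub>F s in \<U>. ring.has_annihilator_of_degree (L s) (F s) n (x s)"
    using eventually_in_index
  proof eventually_elim
    case (elim s)
    then show ?case
      using field.has_annihilator_descends_from_transcendental_extension[unfolded over_def,
          OF field_L[OF elim(2)] F[OF elim(2)] t(1)[OF elim(2)] t(2)[OF elim(2)] x_alg[OF elim(2)]]
      unfolding M_def by blast
  qed
  then show ?thesis
    using algebraic_cls_iff[OF subfieldE(1)[OF F] x_up] by blast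
qed

end

theorem mainTheorem6:
  fixes S :: "'s set" and D :: "'s set set"
    and L :: "'s \<Rightarrow> 'a ring"   \<comment> \<open>L s = the algebraic closure of F_s(t)\<close>
    and F :: "'s \<Rightarrow> 'a set"     \<comment> \<open>F s = the field F_s inside L s\<close>
    and t :: "'s \<Rightarrow> 'a"         \<comment> \<open>t s = the variable t of F_s(t)\<close>
  assumes "infinite S"
    and "ultrafilter_on S D" and "nonprincipal_on S D"
    and "\<And>s. s \<in> S \<Longrightarrow> subfield (F s) (L s)"
    and "\<And>s. s \<in> S \<Longrightarrow> t s \<in> carrier (L s)"
    and "\<And>s. s \<in> S \<Longrightarrow> ring.transcendental (L s) (F s) (t s)"
    and "\<And>s. s \<in> S \<Longrightarrow> algebraic_closure (L s) (generate_field (L s) (insert (t s) (F s)))"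
  shows
    "usub D S L (\<lambda>s. alg_in (L s) (F s))
       \<inter> alg_in (ultraproduct D S L)
           (generate_field (ultraproduct D S L)
              (insert (ulim D S L (restrict t S)) (usub D S L F)))
     = usub D S L (\<lambda>s. alg_in (L s) (F s))
       \<inter> alg_in (ultraproduct D S L) (usub D S L F)"
proof -
  have "field (L s)" if "s \<in> S" for s
    using assms(7)[OF that] algebraic_closure.axioms(1) by blast
  then interpret field_ultraproduct S D L
    by (rule field_ultraproduct.intro[OF assms(2)])
  let ?G = "generate_field U (insert (cls (restrict t S)) (usub D S L F))"
  have "usub D S L F \<subseteq> ?G" by (auto intro: generate_field.incl)
  then have up: "U.algebraic ?G y" if "U.algebraic (usub D S L F) y" for y
    using U.algebraic_mono[of "usub D S L F" ?G y] that by (simp add: over_def)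
  have down: "U.algebraic (usub D S L F) y"
    if y: "y \<in> usub D S L (\<lambda>s. alg_in (L s) (F s))" "U.algebraic ?G y" for y
  proof -
    obtain x where x: "x \<in> (\<Pi>\<^sub>E s\<in>S. alg_in (L s) (F s))" "y = cls x"
      using y(1) unfolding usub_def by blast
    show ?thesis
      using algebraic_descends_from_transcendental_extension[OF assms(4-6) x(1)] y(2)
      unfolding x(2) by blast
  qed
  show ?thesis
    unfolding alg_in_def[where L = U] using up down by blast
qed

end
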